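(* Suppose $w$ satisfies (A1). Let $f\in C^2([0,1])$ and let $u\in C^4([0,1])$ be the classical solution of $-u''=f$ in $\Omega$, $u(0)=u(1)=0$. For $\delta\in(0,1/2)$ let $u_\delta\in L^2(\Omega)$ be the solution of the constant-extension nonlocal problem $\mathcal L_\delta u_\delta(x)=\int_{x-\delta}^{x+\delta}(u_\delta(x)-u_\delta(y))w_\delta(x,y)\,dy=f(x)$ for $x\in\Omega$, with $u_\delta(y)=0$ for $y\in(-\delta,0]\cup[1,1+\delta)$. Then there exist $\delta_0>0$ and $C>0$ such that $\|u_\delta-u\|_{L^\infty(\Omega)}\le C\delta$ for all $\delta\in(0,\delta_0)$.
   Context: $\Omega=(0,1)$. A function $w:[0,\infty)\to[0,\infty)$ satisfies (A1) if $w$ is continuous and nonincreasing on $[0,1)$, positive on $(0,1)$, $w(r)=0$ for $r\ge 1$, and $\int_{\mathbb R} w(|z|)|z|^2\,dz=2$. Set $w_\delta(x,y)=\delta^{-3}w(|x-y|/\delta)$. *)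

theory Defs
  imports "HOL-Analysis.Analysis"
begin

definition A1 :: "(real \<Rightarrow> real) \<Rightarrow> bool" where
  "A1 w \<longleftrightarrow>
     (\<forall>r\<ge>0. w r \<ge> 0) \<and>
     continuous_on {0..<1} w \<and>
     (\<forall>r s. 0 \<le> r \<and> r \<le> s \<and> s < 1 \<longrightarrow> w s \<le> w r) \<and>
     (\<forall>r\<in>{0<..<1}. w r > 0) \<and>
     (\<forall>r\<ge>1. w r = 0) \<and>
     ((\<lambda>z. w \<bar>z\<bar> * \<bar>z\<bar>\<^sup>2) has_integral 2) UNIV"

definition wdelta :: "(real \<Rightarrow> real) \<Rightarrow> real \<Rightarrow> real \<Rightarrow> real \<Rightarrow> real" where
  "wdelta w \<delta> x y = w (\<bar>x - y\<bar> / \<delta>) / \<delta> ^ 3"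

definition Ck_on :: "nat \<Rightarrow> real set \<Rightarrow> (real \<Rightarrow> real) \<Rightarrow> bool" where
  "Ck_on k S g \<longleftrightarrow> (\<exists>D. D 0 = g \<and>
     (\<forall>i<k. \<forall>x\<in>S. (D i has_real_derivative D (Suc i) x) (at x within S)) \<and>
     (\<forall>i\<le>k. continuous_on S (D i)))"

end

(*
  The error u_delta - u is controlled by a comparison argument for the nonlocal operator L_delta.
  Applied to the zero extension of u, L_delta reproduces -u'' = f up to O(delta) at interior points,
  because the kernel w_delta(x,.) has vanishing first moment and second moment 2; near the boundary
  the extension by zero costs an extra error proportional to the distance of y to [0,1]. The barrier
  Phi = A delta (y + delta) (1 + delta - y) + K (delta - dist(y, [0,1])) is O(delta), and L_delta Phi
  = 2 A delta + K * (integral of dist against w_delta) exceeds this consistency error by delta. So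
  +-(u_delta - u) - Phi is a strict subsolution that is nonpositive in the collar, and a maximum
  principle makes it nonpositive everywhere. As u_delta is only in L^2, the maximum principle is
  proved for essentially bounded functions, by lowering an a.e. upper bound in finitely many steps
  of fixed size; the a.e. bound itself comes from the equation, since the kernel mass is at least
  w(1/2) / delta^2.
*)
theory Submission
  imports Defs
begin

lemma set_integrable_Icc_bounded:
  fixes h :: "real \<Rightarrow> real"
  assumes "h \<in> borel_measurable borel" "\<And>y. y \<in> {a..b} \<Longrightarrow> \<bar>h y\<bar> \<le> B"
  shows "set_integrable lborel {a..b} h"
proof (rule set_integrable_bound[where f="\<lambda>_. B"])
  show "set_integrable lborel {a..b} (\<lambda>_. B)"
    by (simp add: set_integrable_def integrable_indicator_iff emeasure_lborel_Icc_eq)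
  show "set_borel_measurable lborel {a..b} h"
    using assms(1) by (simp add: set_borel_measurable_def)
  show "AE y in lborel. y \<in> {a..b} \<longrightarrow> norm (h y) \<le> norm B"
    using assms(2) by (intro AE_I2) force
qed

lemma set_integral_abs_le:
  fixes f g :: "'a::euclidean_space \<Rightarrow> real"
  assumes "set_integrable M A f" "set_integrable M A g" "\<And>x. x \<in> A \<Longrightarrow> \<bar>f x\<bar> \<le> g x"
  shows "\<bar>LINT x:A|M. f x\<bar> \<le> (LINT x:A|M. g x)"
  unfolding set_lebesgue_integral_def
  by (rule integral_abs_bound_integral) (use assms in \<open>auto simp: set_integrable_def indicator_def\<close>)

lemma set_integrable_abs_of_square:
  fixes U :: "'a \<Rightarrow> real"
  assumes "A \<in> sets M" "emeasure M A < \<infinity>" "U \<in> borel_measurable M"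
    and "set_integrable M A (\<lambda>x. (U x)\<^sup>2)"
  shows "set_integrable M A (\<lambda>x. \<bar>U x\<bar>)"
proof (rule set_integrable_bound)
  have "set_integrable M A (\<lambda>_. 1 :: real)"
    using assms(1,2) by (simp add: set_integrable_def integrable_indicator_iff Int_absorb2 sets.sets_into_space)
  then show "set_integrable M A (\<lambda>x. 1 + (U x)\<^sup>2)"
    using assms(4) by (rule set_integral_add)
  show "set_borel_measurable M A (\<lambda>x. \<bar>U x\<bar>)"
    using assms(1,3) unfolding set_borel_measurable_def by measurable
  have "\<bar>t\<bar> \<le> 1 + t\<^sup>2" for t :: real
    using zero_le_power2[of "\<bar>t\<bar> - 1/2"] by (simp add: power2_eq_square algebra_simps)
  then show "AE x in M. x \<in> A \<longrightarrow> norm \<bar>U x\<bar> \<le> norm (1 + (U x)\<^sup>2)"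
    by (intro AE_I2) (simp add: add_nonneg_nonneg)
qed

lemma deriv_deriv_eq:
  fixes D :: "nat \<Rightarrow> real \<Rightarrow> real"
  assumes der: "\<And>i t. i < 2 \<Longrightarrow> t \<in> {a..b} \<Longrightarrow>
      (D i has_real_derivative D (Suc i) t) (at t within {a..b})"
    and x: "x \<in> {a<..<b}"
  shows "deriv (deriv (D 0)) x = D 2 x"
proof -
  have der_at: "(D i has_real_derivative D (Suc i) t) (at t)" if "i < 2" "t \<in> {a<..<b}" for i t
    using der[OF that(1), of t] that(2) at_within_Icc_at[of a t b] by auto
  have "(D 1 has_real_derivative D 2 x) (at x)"
    using der_at[of 1 x] x by (simp add: numeral_2_eq_2)
  then have "(deriv (D 0) has_real_derivative D 2 x) (at x)"
  proof (rule has_field_derivative_transform_within_open)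
    show "D 1 t = deriv (D 0) t" if "t \<in> {a<..<b}" for t
      using der_at[of 0 t] that by (simp add: DERIV_imp_deriv)
  qed (use x in auto)
  then show ?thesis
    by (rule DERIV_imp_deriv)
qed

lemma Ck_on_bounded_derivatives:
  assumes "Ck_on k {a..b} u"
  obtains D M where "D 0 = u" "0 \<le> M"
    and "\<And>i t. i < k \<Longrightarrow> t \<in> {a..b} \<Longrightarrow>
      (D i has_real_derivative D (Suc i) t) (at t within {a..b})"
    and "\<And>i t. i \<le> k \<Longrightarrow> t \<in> {a..b} \<Longrightarrow> \<bar>D i t\<bar> \<le> M"
proof -
  obtain D where D0: "D 0 = u"
    and der: "\<forall>i<k. \<forall>t\<in>{a..b}. (D i has_real_derivative D (Suc i) t) (at t within {a..b})"
    and cont: "\<forall>i\<le>k. continuous_on {a..b} (D i)"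
    using assms unfolding Ck_on_def by blast
  have "\<forall>i\<in>{..k}. \<exists>B. \<forall>t\<in>{a..b}. \<bar>D i t\<bar> \<le> B"
  proof
    fix i assume "i \<in> {..k}"
    then obtain B where "\<And>t. t \<in> {a..b} \<Longrightarrow> norm (D i t) \<le> B"
      using continuous_on_compact_bound[OF compact_Icc] cont by blast
    then show "\<exists>B. \<forall>t\<in>{a..b}. \<bar>D i t\<bar> \<le> B"
      by (intro exI[of _ B]) simp
  qed
  then obtain B where B: "\<And>i t. i \<le> k \<Longrightarrow> t \<in> {a..b} \<Longrightarrow> \<bar>D i t\<bar> \<le> B i"
    by (metis atMost_iff bchoice)
  have "\<bar>D i t\<bar> \<le> (\<Sum>j\<le>k. \<bar>B j\<bar>)" if "i \<le> k" "t \<in> {a..b}" for i t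
    using B[OF that] member_le_sum[of i "{..k}" "\<lambda>j. \<bar>B j\<bar>"] that by force
  with D0 der show ?thesis
    by (intro that[of D "\<Sum>j\<le>k. \<bar>B j\<bar>"]) (auto intro: sum_nonneg)
qed

text \<open>The remainder bound of \<open>field_Taylor\<close> has \<open>fact n\<close> rather than \<open>fact (Suc n)\<close>
  in the denominator, hence the factor \<open>1/2\<close> instead of \<open>1/6\<close>.\<close>

lemma taylor_quadratic_remainder:
  fixes D :: "nat \<Rightarrow> real \<Rightarrow> real"
  assumes "\<And>i t. i \<le> 2 \<Longrightarrow> t \<in> {a..b} \<Longrightarrow>
      (D i has_real_derivative D (Suc i) t) (at t within {a..b})"
    and "\<And>t. t \<in> {a..b} \<Longrightarrow> \<bar>D 3 t\<bar> \<le> M"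
    and "x \<in> {a..b}" "z \<in> {a..b}"
  shows "\<bar>D 0 z - (D 0 x + D 1 x * (z - x) + D 2 x / 2 * (z - x)^2)\<bar> \<le> M * \<bar>z - x\<bar>^3 / 2"
proof -
  have "norm (D 0 z - (\<Sum>i\<le>2. D i x * (z - x)^i / fact i)) \<le> M * norm (z - x)^Suc 2 / fact 2"
    by (rule field_Taylor[of "{a..b}"]) (use assms in auto)
  moreover have "(\<Sum>i\<le>2. D i x * (z - x)^i / fact i) = D 0 x + D 1 x * (z - x) + D 2 x / 2 * (z - x)^2"
    by (simp add: numeral_2_eq_2)
  ultimately show ?thesis
    by (simp add: numeral_3_eq_3)
qed

lemma A1_nonneg: "A1 w \<Longrightarrow> 0 \<le> r \<Longrightarrow> 0 \<le> w r"
  by (simp add: A1_def)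

lemma A1_eq_0: "A1 w \<Longrightarrow> 1 \<le> r \<Longrightarrow> w r = 0"
  by (simp add: A1_def)

lemma A1_half_pos: "A1 w \<Longrightarrow> 0 < w (1/2)"
  by (simp add: A1_def)

lemma A1_antimono:
  assumes "A1 w" "0 \<le> r" "r \<le> s"
  shows "w s \<le> w r"
proof (cases "s < 1")
  case True
  then show ?thesis using assms by (auto simp: A1_def)
next
  case False
  then have "w s = 0" using assms(1) by (simp add: A1_eq_0)
  then show ?thesis using A1_nonneg[OF assms(1,2)] by simp
qed

lemma A1_zero_pos: "A1 w \<Longrightarrow> 0 < w 0"
  using A1_half_pos[of w] A1_antimono[of w 0 "1/2"] by simp

lemma A1_borel_measurable: "A1 w \<Longrightarrow> (\<lambda>r. w (max 0 r)) \<in> borel_measurable borel"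
proof -
  assume "A1 w"
  then have "mono (\<lambda>r. - w (max 0 r))"
    by (auto simp: mono_def intro: A1_antimono)
  then have "(\<lambda>r. - (- w (max 0 r))) \<in> borel_measurable borel"
    by (intro borel_measurable_uminus borel_measurable_mono)
  then show ?thesis by simp
qed

lemma A1_second_moment:
  assumes "A1 w"
  shows "integrable lborel (\<lambda>z. w \<bar>z\<bar> * z\<^sup>2)" and "(\<integral>z. w \<bar>z\<bar> * z\<^sup>2 \<partial>lborel) = 2"
proof -
  have hi: "((\<lambda>z. w \<bar>z\<bar> * z\<^sup>2) has_integral 2) UNIV"
    using assms by (simp add: A1_def)
  have "(\<lambda>z. w \<bar>z\<bar> * z\<^sup>2) absolutely_integrable_on UNIV"
    using nonnegative_absolutely_integrable_1[of _ UNIV] hi assms by (force simp: A1_nonneg)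
  then have "integrable lebesgue (\<lambda>z. w \<bar>z\<bar> * z\<^sup>2)"
    by (simp add: set_integrable_def)
  moreover have "(\<lambda>z. w (max 0 \<bar>z\<bar>) * z\<^sup>2) \<in> borel_measurable borel"
    using A1_borel_measurable[OF assms] by measurable
  ultimately show int: "integrable lborel (\<lambda>z. w \<bar>z\<bar> * z\<^sup>2)"
    using integrable_completion[of "\<lambda>z. w \<bar>z\<bar> * z\<^sup>2"] by simp
  show "(\<integral>z. w \<bar>z\<bar> * z\<^sup>2 \<partial>lborel) = 2"
    using integral_lborel[OF int] hi by (simp add: integral_unique)
qed

lemma wdelta_nonneg: "A1 w \<Longrightarrow> 0 < d \<Longrightarrow> 0 \<le> wdelta w d x y"
  by (simp add: wdelta_def A1_nonneg)

lemma wdelta_le: "A1 w \<Longrightarrow> 0 < d \<Longrightarrow> wdelta w d x y \<le> w 0 / d^3"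
  unfolding wdelta_def by (intro divide_right_mono A1_antimono[of w 0]) auto

lemma wdelta_ge_half:
  assumes "A1 w" "0 < d" "\<bar>x - y\<bar> \<le> d / 2"
  shows "w (1/2) / d^3 \<le> wdelta w d x y"
  unfolding wdelta_def using assms
  by (intro divide_right_mono A1_antimono[of w _ "1/2"]) (auto simp: divide_le_eq)

lemma wdelta_borel_measurable:
  assumes "A1 w" "0 < d"
  shows "(\<lambda>y. wdelta w d x y) \<in> borel_measurable borel"
proof -
  have "(\<lambda>y. w (max 0 (\<bar>x - y\<bar> / d)) / d^3) \<in> borel_measurable borel"
    using A1_borel_measurable[OF assms(1)] by measurable
  then show ?thesis
    using assms(2) by (simp add: wdelta_def)
qed

lemma wdelta_set_integrable:
  assumes "A1 w" "0 < d" "h \<in> borel_measurable borel" "\<And>y. y \<in> {x-d..x+d} \<Longrightarrow> \<bar>h y\<bar> \<le> B"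
  shows "set_integrable lborel {x-d..x+d} (\<lambda>y. h y * wdelta w d x y)"
proof (rule set_integrable_Icc_bounded)
  show "(\<lambda>y. h y * wdelta w d x y) \<in> borel_measurable borel"
    using assms(3) wdelta_borel_measurable[OF assms(1,2)] by measurable
  fix y assume "y \<in> {x-d..x+d}"
  then show "\<bar>h y * wdelta w d x y\<bar> \<le> B * (w 0 / d^3)"
    unfolding abs_mult using assms wdelta_nonneg wdelta_le
    by (intro mult_mono) (auto intro: order_trans[OF abs_ge_zero])
qed

lemma wdelta_set_integrable_continuous:
  assumes "A1 w" "0 < d" "continuous_on UNIV h"
  shows "set_integrable lborel {x-d..x+d} (\<lambda>y. h y * wdelta w d x y)"
proof -
  obtain B where "\<And>y. y \<in> {x-d..x+d} \<Longrightarrow> norm (h y) \<le> B"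
    using continuous_on_compact_bound[of "{x-d..x+d}" h] assms(3)
    by (metis compact_Icc continuous_on_subset top_greatest)
  with assms show ?thesis
    by (intro wdelta_set_integrable) (auto intro: borel_measurable_continuous_onI)
qed

lemma wdelta_second_moment:
  assumes "A1 w" "0 < d"
  shows "(LINT y:{x-d..x+d}|lborel. (y - x)^2 * wdelta w d x y) = 2"
proof -
  define G where "G y = w \<bar>(y - x) / d\<bar> * ((y - x) / d)\<^sup>2 / d" for y
  have "(\<integral>y. G y \<partial>lborel) = d * (\<integral>z. G (x + d * z) \<partial>lborel)"
    using lborel_integral_real_affine[of d G x] assms(2) by simp
  also have "\<dots> = 2"
    using A1_second_moment(2)[OF assms(1)] assms(2) by (simp add: G_def)
  finally have G2: "(\<integral>y. G y \<partial>lborel) = 2" .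
  have "indicator {x-d..x+d} y * ((y - x)^2 * wdelta w d x y) = G y" for y
  proof (cases "y \<in> {x-d..x+d}")
    case True
    then show ?thesis using assms(2)
      by (simp add: G_def wdelta_def field_simps power2_eq_square power3_eq_cube abs_minus_commute abs_divide)
  next
    case False
    then have "1 \<le> \<bar>(y - x) / d\<bar>" using assms(2) by (auto simp: abs_divide le_divide_eq)
    then show ?thesis using False A1_eq_0[OF assms(1)] by (simp add: G_def)
  qed
  then show ?thesis using G2 by (simp add: set_lebesgue_integral_def)
qed

lemma wdelta_first_moment: "(LINT y:{x-d..x+d}|lborel. (y - x) * wdelta w d x y) = 0"
proof -
  define G where "G y = indicator {x-d..x+d} y * ((y - x) * wdelta w d x y)" for y
  have "(\<integral>y. G y \<partial>lborel) = (\<integral>z. G (2*x + (-1) * z) \<partial>lborel)"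
    using lborel_integral_real_affine[of "-1" G "2*x"] by simp
  also have "(\<lambda>z. G (2*x + (-1) * z)) = (\<lambda>z. - G z)"
  proof
    fix z
    have "indicator {x-d..x+d} (2*x + (-1) * z) = (indicator {x-d..x+d} z :: real)"
      "\<bar>x - (2*x + (-1) * z)\<bar> = \<bar>x - z\<bar>"
      by (auto simp: indicator_def)
    then show "G (2*x + (-1) * z) = - G z"
      unfolding G_def wdelta_def by (simp only:) (simp add: algebra_simps diff_divide_distrib)
  qed
  finally show ?thesis by (simp add: G_def set_lebesgue_integral_def)
qed

lemma wdelta_mass_bounds:
  assumes "A1 w" "0 < d"
  shows "w (1/2) / d^2 \<le> (LINT y:{x-d..x+d}|lborel. wdelta w d x y)"
    and "(LINT y:{x-d..x+d}|lborel. wdelta w d x y) \<le> 2 * w 0 / d^2"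
proof -
  have int: "set_integrable lborel {x-d..x+d} (\<lambda>y. wdelta w d x y)"
    using wdelta_set_integrable_continuous[OF assms, of "\<lambda>_. 1"] by simp
  have "(LINT y:{x-d..x+d}|lborel. wdelta w d x y) \<le> (LINT y:{x-d..x+d}|lborel. w 0 / d^3)"
    using assms by (intro set_integral_mono int set_integrable_Icc_bounded wdelta_le) auto
  also have "\<dots> = 2 * w 0 / d^2"
    using assms(2) by (simp add: set_integral_const power2_eq_square power3_eq_cube)
  finally show "(LINT y:{x-d..x+d}|lborel. wdelta w d x y) \<le> 2 * w 0 / d^2" .
  have "w (1/2) / d^2 = (LINT y:{x-d/2..x+d/2}|lborel. w (1/2) / d^3)"
    using assms(2) by (simp add: set_integral_const power2_eq_square power3_eq_cube)
  also have "\<dots> = (LINT y:{x-d..x+d}|lborel. indicator {x-d/2..x+d/2} y * (w (1/2) / d^3))"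
    unfolding set_lebesgue_integral_def using assms(2)
    by (intro Bochner_Integration.integral_cong) (auto simp: indicator_def)
  also have "\<dots> \<le> (LINT y:{x-d..x+d}|lborel. wdelta w d x y)"
  proof (rule set_integral_mono[OF _ int])
    show "set_integrable lborel {x-d..x+d} (\<lambda>y. indicator {x-d/2..x+d/2} y * (w (1/2) / d^3))"
      by (rule set_integrable_Icc_bounded[where B="\<bar>w (1/2) / d^3\<bar>"]) (auto simp: indicator_def)
    show "indicator {x-d/2..x+d/2} y * (w (1/2) / d^3) \<le> wdelta w d x y" for y
    proof (cases "y \<in> {x-d/2..x+d/2}")
      case True
      then have "\<bar>x - y\<bar> \<le> d / 2" unfolding atLeastAtMost_iff abs_le_iff by linarith
      then show ?thesis using True wdelta_ge_half[OF assms] by (simp only: indicator_simps mult_1)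
    next
      case False
      then show ?thesis using wdelta_nonneg[OF assms] by (auto simp: indicator_def)
    qed
  qed
  finally show "w (1/2) / d^2 \<le> (LINT y:{x-d..x+d}|lborel. wdelta w d x y)" .
qed

lemma wdelta_mass_pos: "A1 w \<Longrightarrow> 0 < d \<Longrightarrow> 0 < (LINT y:{x-d..x+d}|lborel. wdelta w d x y)"
  using wdelta_mass_bounds(1)[of w d x] A1_half_pos[of w] by (smt (verit) divide_pos_pos zero_less_power)

lemma wdelta_set_integral_le:
  assumes "A1 w" "0 < d" "set_integrable lborel {x-d..x+d} (\<lambda>y. V y * wdelta w d x y)"
    and "AE y in lborel. y \<in> {x-d..x+d} \<longrightarrow> V y \<le> m"
  shows "(LINT y:{x-d..x+d}|lborel. V y * wdelta w d x y) \<le> m * (LINT y:{x-d..x+d}|lborel. wdelta w d x y)"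
proof -
  have "(LINT y:{x-d..x+d}|lborel. V y * wdelta w d x y) \<le> (LINT y:{x-d..x+d}|lborel. m * wdelta w d x y)"
  proof (rule set_integral_mono_AE[OF assms(3)])
    show "set_integrable lborel {x-d..x+d} (\<lambda>y. m * wdelta w d x y)"
      using wdelta_set_integrable_continuous[OF assms(1,2), of "\<lambda>_. m"] by simp
    show "AE y\<in>{x-d..x+d} in lborel. V y * wdelta w d x y \<le> m * wdelta w d x y"
      using assms(4) by eventually_elim (auto intro: mult_right_mono wdelta_nonneg[OF assms(1,2)])
  qed
  then show ?thesis by simp
qed

lemma wdelta_set_integral_abs_le_L1:
  assumes "A1 w" "0 < d" and x: "x \<in> {0<..<1}"
    and L1: "set_integrable lborel {0<..<1} (\<lambda>y. \<bar>U y\<bar>)"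
    and collar: "\<And>y. y \<in> {-d<..0} \<or> y \<in> {1..<1+d} \<Longrightarrow> U y = 0"
    and int: "set_integrable lborel {x-d..x+d} (\<lambda>y. U y * wdelta w d x y)"
  shows "\<bar>LINT y:{x-d..x+d}|lborel. U y * wdelta w d x y\<bar>
           \<le> w 0 / d^3 * (LINT y:{0<..<1}|lborel. \<bar>U y\<bar>)"
proof -
  define J where "J = {x-d..x+d}"
  have IU: "integrable lborel (\<lambda>y. indicator {0<..<1} y * \<bar>U y\<bar>)"
    using L1 by (simp add: set_integrable_def)
  have "\<bar>LINT y:J|lborel. U y * wdelta w d x y\<bar>
      \<le> (LINT y:J|lborel. w 0 / d^3 * (indicator {0<..<1} y * \<bar>U y\<bar>))"
  proof (rule set_integral_abs_le)
    show "set_integrable lborel J (\<lambda>y. w 0 / d^3 * (indicator {0<..<1} y * \<bar>U y\<bar>))"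
      using IU unfolding set_integrable_def J_def by (intro integrable_mult_indicator integrable_mult_right) auto
    fix y assume "y \<in> J"
    show "\<bar>U y * wdelta w d x y\<bar> \<le> w 0 / d^3 * (indicator {0<..<1} y * \<bar>U y\<bar>)"
    proof (cases "y \<in> {0<..<1}")
      case True
      have "\<bar>U y\<bar> * wdelta w d x y \<le> \<bar>U y\<bar> * (w 0 / d^3)"
        using wdelta_le[OF assms(1,2)] by (rule mult_left_mono) simp
      then show ?thesis
        using True wdelta_nonneg[OF assms(1,2), of x y] by (simp add: abs_mult mult_ac)
    next
      case False
      then have "U y = 0" using collar x \<open>y \<in> J\<close> by (auto simp: J_def)
      then show ?thesis by simp
    qed
  qed (use int in \<open>simp add: J_def\<close>)
  also have "\<dots> \<le> w 0 / d^3 * (LINT y:{0<..<1}|lborel. \<bar>U y\<bar>)"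
  proof -
    have "(LINT y:J|lborel. indicator {0<..<1} y * \<bar>U y\<bar>) \<le> (LINT y:{0<..<1}|lborel. \<bar>U y\<bar>)"
      unfolding set_lebesgue_integral_def
    proof (rule integral_mono)
      show "integrable lborel (\<lambda>y. indicator J y *\<^sub>R (indicator {0<..<1} y * \<bar>U y\<bar>))"
        using IU by (intro integrable_mult_indicator) (auto simp: J_def)
    qed (use IU in \<open>auto simp: indicator_def\<close>)
    moreover have "0 \<le> w 0 / d^3"
      using A1_nonneg[OF assms(1), of 0] assms(2) by simp
    ultimately show ?thesis
      unfolding set_integral_mult_right by (rule mult_left_mono)
  qed
  finally show ?thesis unfolding J_def .
qed

section \<open>The nonlocal operator\<close>

definition nonlocal_integrable :: "(real \<Rightarrow> real) \<Rightarrow> real \<Rightarrow> (real \<Rightarrow> real) \<Rightarrow> real \<Rightarrow> bool" where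
  "nonlocal_integrable w d V x \<longleftrightarrow>
     set_integrable lborel {x-d..x+d} (\<lambda>y. (V x - V y) * wdelta w d x y)"

definition nonlocal_op :: "(real \<Rightarrow> real) \<Rightarrow> real \<Rightarrow> (real \<Rightarrow> real) \<Rightarrow> real \<Rightarrow> real" where
  "nonlocal_op w d V x = (LINT y:{x-d..x+d}|lborel. (V x - V y) * wdelta w d x y)"

lemma nonlocal_integrable_bounded:
  assumes "A1 w" "0 < d" "V \<in> borel_measurable borel" "\<And>y. \<bar>V y\<bar> \<le> B"
  shows "nonlocal_integrable w d V x"
proof -
  have "\<bar>V x - V y\<bar> \<le> 2 * B" for y
    using abs_triangle_ineq4[of "V x" "V y"] assms(4)[of x] assms(4)[of y] by linarith
  then show ?thesis
    unfolding nonlocal_integrable_def using assms(1-3)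
    by (intro wdelta_set_integrable[where B="2 * B"]) auto
qed

lemma nonlocal_integrable_continuous:
  "A1 w \<Longrightarrow> 0 < d \<Longrightarrow> continuous_on UNIV V \<Longrightarrow> nonlocal_integrable w d V x"
  unfolding nonlocal_integrable_def
  by (intro wdelta_set_integrable_continuous) (auto intro!: continuous_intros)

lemma nonlocal_op_diff:
  assumes "nonlocal_integrable w d U x" "nonlocal_integrable w d V x"
  shows "nonlocal_integrable w d (\<lambda>y. U y - V y) x"
    and "nonlocal_op w d (\<lambda>y. U y - V y) x = nonlocal_op w d U x - nonlocal_op w d V x"
proof -
  have eq: "((U x - V x) - (U y - V y)) * wdelta w d x y
      = (U x - U y) * wdelta w d x y - (V x - V y) * wdelta w d x y" for y
    by (simp add: algebra_simps)
  show "nonlocal_integrable w d (\<lambda>y. U y - V y) x"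
    using assms unfolding nonlocal_integrable_def eq by (rule set_integral_diff)
  show "nonlocal_op w d (\<lambda>y. U y - V y) x = nonlocal_op w d U x - nonlocal_op w d V x"
    using assms unfolding nonlocal_integrable_def nonlocal_op_def eq by (rule set_integral_diff)
qed

lemma nonlocal_op_cmult:
  assumes "nonlocal_integrable w d V x"
  shows "nonlocal_integrable w d (\<lambda>y. c * V y) x"
    and "nonlocal_op w d (\<lambda>y. c * V y) x = c * nonlocal_op w d V x"
proof -
  have eq: "(c * V x - c * V y) * wdelta w d x y = c * ((V x - V y) * wdelta w d x y)" for y
    by (simp add: algebra_simps)
  show "nonlocal_integrable w d (\<lambda>y. c * V y) x"
    using assms unfolding nonlocal_integrable_def eq by simp
  show "nonlocal_op w d (\<lambda>y. c * V y) x = c * nonlocal_op w d V x"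
    unfolding nonlocal_op_def eq by simp
qed

lemma nonlocal_op_split:
  assumes "A1 w" "0 < d" "nonlocal_integrable w d V x"
  shows "set_integrable lborel {x-d..x+d} (\<lambda>y. V y * wdelta w d x y)"
    and "nonlocal_op w d V x = V x * (LINT y:{x-d..x+d}|lborel. wdelta w d x y)
                               - (LINT y:{x-d..x+d}|lborel. V y * wdelta w d x y)"
proof -
  have mass: "set_integrable lborel {x-d..x+d} (\<lambda>y. V x * wdelta w d x y)"
    using wdelta_set_integrable_continuous[OF assms(1,2), of "\<lambda>_. V x"] by simp
  have eq: "V y * wdelta w d x y = V x * wdelta w d x y - (V x - V y) * wdelta w d x y" for y
    by (simp add: algebra_simps)
  show int: "set_integrable lborel {x-d..x+d} (\<lambda>y. V y * wdelta w d x y)"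
    unfolding eq using mass assms(3)[unfolded nonlocal_integrable_def] by (rule set_integral_diff)
  have "nonlocal_op w d V x
      = (LINT y:{x-d..x+d}|lborel. V x * wdelta w d x y - V y * wdelta w d x y)"
    unfolding nonlocal_op_def by (simp add: algebra_simps)
  also have "\<dots> = V x * (LINT y:{x-d..x+d}|lborel. wdelta w d x y)
                 - (LINT y:{x-d..x+d}|lborel. V y * wdelta w d x y)"
    using set_integral_diff(2)[OF mass int] by simp
  finally show "nonlocal_op w d V x = V x * (LINT y:{x-d..x+d}|lborel. wdelta w d x y)
                               - (LINT y:{x-d..x+d}|lborel. V y * wdelta w d x y)" .
qed

lemma nonlocal_op_quadratic_remainder:
  fixes a b :: real
  assumes "A1 w" "0 < d" "nonlocal_integrable w d V x"
  defines "R \<equiv> \<lambda>y. V y - (V x + a * (y - x) + b / 2 * (y - x)^2)"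
  shows "set_integrable lborel {x-d..x+d} (\<lambda>y. R y * wdelta w d x y)"
    and "nonlocal_op w d V x = - b - (LINT y:{x-d..x+d}|lborel. R y * wdelta w d x y)"
proof -
  define J where "J = {x-d..x+d}"
  define W where "W = wdelta w d x"
  have iV: "set_integrable lborel J (\<lambda>y. (V x - V y) * W y)"
    using assms(3) unfolding nonlocal_integrable_def J_def W_def .
  have i1: "set_integrable lborel J (\<lambda>y. a * ((y - x) * W y))"
    using wdelta_set_integrable_continuous[OF assms(1,2), of "\<lambda>y. y - x" x]
    unfolding J_def W_def by (simp add: continuous_intros)
  have i2: "set_integrable lborel J (\<lambda>y. b / 2 * ((y - x)^2 * W y))"
    using wdelta_set_integrable_continuous[OF assms(1,2), of "\<lambda>y. (y - x)^2" x]
    unfolding J_def W_def by (simp add: continuous_intros)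
  have eq: "R y * W y = - ((V x - V y) * W y + a * ((y - x) * W y) + b / 2 * ((y - x)^2 * W y))" for y
    by (simp add: R_def algebra_simps)
  have iR: "set_integrable lborel J (\<lambda>y. (V x - V y) * W y + a * ((y - x) * W y) + b / 2 * ((y - x)^2 * W y))"
    by (intro set_integral_add iV i1 i2)
  then show "set_integrable lborel {x-d..x+d} (\<lambda>y. R y * wdelta w d x y)"
    using set_integrable_mult_right[OF iR, of "-1"] unfolding J_def[symmetric] W_def[symmetric] eq
    by simp
  have "(LINT y:J|lborel. R y * W y)
      = - (nonlocal_op w d V x + a * (LINT y:J|lborel. (y - x) * W y)
           + b / 2 * (LINT y:J|lborel. (y - x)^2 * W y))"
    unfolding eq set_integral_uminus[OF iR] nonlocal_op_def J_def[symmetric] W_def[symmetric]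
    using iV i1 i2 by (simp add: set_integral_add)
  also have "\<dots> = - (nonlocal_op w d V x + b)"
    using wdelta_first_moment wdelta_second_moment[OF assms(1,2)] unfolding J_def W_def by simp
  finally show "nonlocal_op w d V x = - b - (LINT y:{x-d..x+d}|lborel. R y * wdelta w d x y)"
    unfolding J_def W_def by simp
qed

section \<open>Maximum principle\<close>

lemma nonlocal_max_principle_step:
  assumes "A1 w" "0 < d" "0 < \<epsilon>" "0 \<le> m"
    and collar: "\<And>y. y \<in> {-d<..0} \<or> y \<in> {1..<1+d} \<Longrightarrow> V y \<le> 0"
    and subsol: "AE x in lborel. x \<in> {0<..<1} \<longrightarrow>
        nonlocal_integrable w d V x \<and> nonlocal_op w d V x \<le> - \<epsilon>"
    and bound: "AE x in lborel. x \<in> {0<..<1} \<longrightarrow> V x \<le> m"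
  shows "AE x in lborel. x \<in> {0<..<1} \<longrightarrow> V x \<le> m - \<epsilon> / (2 * w 0 / d^2)"
  using subsol
proof eventually_elim
  case (elim x)
  show ?case
  proof
    assume x: "x \<in> {0<..<1}"
    define c where "c = (LINT y:{x-d..x+d}|lborel. wdelta w d x y)"
    have int: "nonlocal_integrable w d V x" and le: "nonlocal_op w d V x \<le> - \<epsilon>"
      using elim x by auto
    have "AE y in lborel. y \<in> {x-d..x+d} \<longrightarrow> V y \<le> m"
      using bound
    proof eventually_elim
      case (elim y)
      show ?case
      proof
        assume y: "y \<in> {x-d..x+d}"
        show "V y \<le> m"
        proof (cases "y \<in> {0<..<1}")
          case False
          then have "y \<in> {-d<..0} \<or> y \<in> {1..<1+d}" using x y by auto
          then show ?thesis using collar assms(4) by force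
        qed (use elim in auto)
      qed
    qed
    then have "(LINT y:{x-d..x+d}|lborel. V y * wdelta w d x y) \<le> m * c"
      unfolding c_def by (rule wdelta_set_integral_le[OF assms(1,2) nonlocal_op_split(1)[OF assms(1,2) int]])
    then have "(V x - m) * c \<le> - \<epsilon>"
      using le nonlocal_op_split(2)[OF assms(1,2) int] unfolding c_def by (simp add: algebra_simps)
    then have "V x - m \<le> - \<epsilon> / c"
      using wdelta_mass_pos[OF assms(1,2)] unfolding c_def by (subst pos_le_divide_eq) auto
    also have "\<dots> \<le> - \<epsilon> / (2 * w 0 / d^2)"
    proof -
      have "\<epsilon> / (2 * w 0 / d^2) \<le> \<epsilon> / c"
        using wdelta_mass_bounds(2)[OF assms(1,2), of x] wdelta_mass_pos[OF assms(1,2), of x]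
          A1_zero_pos[OF assms(1)] assms(2,3) unfolding c_def
        by (intro divide_left_mono) auto
      then show ?thesis by simp
    qed
    finally show "V x \<le> m - \<epsilon> / (2 * w 0 / d^2)" by simp
  qed
qed

lemma nonlocal_max_principle:
  assumes "A1 w" "0 < d" "0 < \<epsilon>"
    and collar: "\<And>y. y \<in> {-d<..0} \<or> y \<in> {1..<1+d} \<Longrightarrow> V y \<le> 0"
    and subsol: "AE x in lborel. x \<in> {0<..<1} \<longrightarrow>
        nonlocal_integrable w d V x \<and> nonlocal_op w d V x \<le> - \<epsilon>"
    and bounded: "AE x in lborel. x \<in> {0<..<1} \<longrightarrow> V x \<le> m"
  shows "AE x in lborel. x \<in> {0<..<1} \<longrightarrow> V x \<le> 0"
proof -
  define \<eta> where "\<eta> = \<epsilon> / (2 * w 0 / d^2)"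
  have \<eta>_pos: "0 < \<eta>"
    unfolding \<eta>_def using A1_zero_pos[OF assms(1)] assms(2,3) by simp
  text \<open>The essential supremum need not be attained, so instead of evaluating the
    operator at a maximum point the bound is lowered by \<open>\<eta>\<close> finitely many times.\<close>
  have iterate: "AE x in lborel. x \<in> {0<..<1} \<longrightarrow> V x \<le> max 0 (max m 0 - real n * \<eta>)" for n
  proof (induction n)
    case 0
    show ?case using bounded by eventually_elim auto
  next
    case (Suc n)
    have "AE x in lborel. x \<in> {0<..<1} \<longrightarrow> V x \<le> max 0 (max m 0 - real n * \<eta>) - \<eta>"
      using nonlocal_max_principle_step[OF assms(1-3) _ collar subsol Suc.IH] unfolding \<eta>_def by simp
    then show ?case
      by eventually_elim (use \<eta>_pos in \<open>auto simp: algebra_simps max_def split: if_splits\<close>)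
  qed
  obtain n :: nat where "max m 0 / \<eta> < real n"
    using reals_Archimedean2 by blast
  then have "max 0 (max m 0 - real n * \<eta>) = 0"
    using \<eta>_pos by (simp add: divide_less_eq)
  then show ?thesis using iterate[of n] by simp
qed

lemma nonlocal_pointwise_bound:
  assumes "A1 w" "0 < d"
    and L1: "set_integrable lborel {0<..<1} (\<lambda>y. \<bar>U y\<bar>)"
    and collar: "\<And>y. y \<in> {-d<..0} \<or> y \<in> {1..<1+d} \<Longrightarrow> U y = 0"
    and x: "x \<in> {0<..<1}" and int: "nonlocal_integrable w d U x"
  shows "\<bar>U x\<bar> \<le> (\<bar>nonlocal_op w d U x\<bar> + w 0 / d^3 * (LINT y:{0<..<1}|lborel. \<bar>U y\<bar>))
                  / (w (1/2) / d^2)"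
proof -
  define c where "c = (LINT y:{x-d..x+d}|lborel. wdelta w d x y)"
  define R where "R = w 0 / d^3 * (LINT y:{0<..<1}|lborel. \<bar>U y\<bar>)"
  have c_pos: "0 < c"
    unfolding c_def by (rule wdelta_mass_pos[OF assms(1,2)])
  have "\<bar>U x\<bar> * c \<le> \<bar>nonlocal_op w d U x\<bar> + R"
    using wdelta_set_integral_abs_le_L1[OF assms(1,2) x L1 collar nonlocal_op_split(1)[OF assms(1,2) int]]
      nonlocal_op_split(2)[OF assms(1,2) int] c_pos
    unfolding c_def R_def by (simp add: abs_mult abs_le_iff) linarith
  then have "\<bar>U x\<bar> \<le> (\<bar>nonlocal_op w d U x\<bar> + R) / c"
    using c_pos by (simp add: pos_le_divide_eq)
  also have "\<dots> \<le> (\<bar>nonlocal_op w d U x\<bar> + R) / (w (1/2) / d^2)"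
  proof (rule divide_left_mono)
    have "0 \<le> (LINT y:{0<..<1}|lborel. \<bar>U y\<bar>)"
      by (simp add: set_lebesgue_integral_def)
    then have "0 \<le> R"
      unfolding R_def using A1_nonneg[OF assms(1), of 0] assms(2) by simp
    then show "0 \<le> \<bar>nonlocal_op w d U x\<bar> + R"
      by simp
    show "w (1/2) / d^2 \<le> c"
      unfolding c_def by (rule wdelta_mass_bounds(1)[OF assms(1,2)])
    show "0 < c * (w (1/2) / d^2)"
      using c_pos A1_half_pos[OF assms(1)] assms(2) by simp
  qed
  finally show ?thesis unfolding R_def .
qed

lemma nonlocal_solution_ess_bounded:
  assumes "A1 w" "0 < d"
    and L1: "set_integrable lborel {0<..<1} (\<lambda>y. \<bar>U y\<bar>)"
    and collar: "\<And>y. y \<in> {-d<..0} \<or> y \<in> {1..<1+d} \<Longrightarrow> U y = 0"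
    and eq: "AE x in lborel. x \<in> {0<..<1} \<longrightarrow>
      nonlocal_integrable w d U x \<and> \<bar>nonlocal_op w d U x\<bar> \<le> F"
  shows "AE x in lborel. x \<in> {0<..<1} \<longrightarrow>
           \<bar>U x\<bar> \<le> (F + w 0 / d^3 * (LINT y:{0<..<1}|lborel. \<bar>U y\<bar>)) / (w (1/2) / d^2)"
  using eq
proof eventually_elim
  case (elim x)
  show ?case
  proof
    assume x: "x \<in> {0<..<1}"
    then have int: "nonlocal_integrable w d U x" and op: "\<bar>nonlocal_op w d U x\<bar> \<le> F"
      using elim by auto
    have "\<bar>U x\<bar> \<le> (\<bar>nonlocal_op w d U x\<bar> + w 0 / d^3 * (LINT y:{0<..<1}|lborel. \<bar>U y\<bar>))
                   / (w (1/2) / d^2)"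
      by (rule nonlocal_pointwise_bound[OF assms(1,2) L1 collar x int])
    also have "\<dots> \<le> (F + w 0 / d^3 * (LINT y:{0<..<1}|lborel. \<bar>U y\<bar>)) / (w (1/2) / d^2)"
      using op A1_half_pos[OF assms(1)] by (intro divide_right_mono add_right_mono) auto
    finally show "\<bar>U x\<bar> \<le> (F + w 0 / d^3 * (LINT y:{0<..<1}|lborel. \<bar>U y\<bar>)) / (w (1/2) / d^2)" .
  qed
qed

section \<open>Consistency of the zero extension\<close>

definition zero_ext :: "(real \<Rightarrow> real) \<Rightarrow> real \<Rightarrow> real" where
  "zero_ext u y = indicator {0..1} y * u y"

definition dist_unit_interval :: "real \<Rightarrow> real" where
  "dist_unit_interval y = max 0 (- y) + max 0 (y - 1)"

lemma continuous_on_dist_unit_interval: "continuous_on S dist_unit_interval"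
  unfolding dist_unit_interval_def by (intro continuous_intros)

lemma zero_ext_borel_measurable:
  "continuous_on {0..1} u \<Longrightarrow> zero_ext u \<in> borel_measurable borel"
  using borel_measurable_continuous_on_indicator[of "{0..1}" u] by (simp add: zero_ext_def[abs_def])

lemma zero_ext_bounded:
  assumes "continuous_on {0..1} u"
  obtains B where "\<And>y. \<bar>zero_ext u y\<bar> \<le> B"
proof -
  obtain B where "B \<ge> 0" "\<And>y. y \<in> {0..1} \<Longrightarrow> norm (u y) \<le> B"
    using continuous_on_compact_bound[OF compact_Icc assms] by blast
  then have "\<bar>zero_ext u y\<bar> \<le> B" for y
    by (simp add: zero_ext_def indicator_def)
  then show ?thesis by (rule that)
qed

lemma zero_ext_taylor_bound:
  fixes D :: "nat \<Rightarrow> real \<Rightarrow> real"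
  assumes der: "\<And>i t. i \<le> 2 \<Longrightarrow> t \<in> {0..1} \<Longrightarrow>
      (D i has_real_derivative D (Suc i) t) (at t within {0..1})"
    and M1: "\<And>t. t \<in> {0..1} \<Longrightarrow> \<bar>D 1 t\<bar> \<le> M1"
    and M2: "\<And>t. t \<in> {0..1} \<Longrightarrow> \<bar>D 2 t\<bar> \<le> M2"
    and M3: "\<And>t. t \<in> {0..1} \<Longrightarrow> \<bar>D 3 t\<bar> \<le> M3"
    and bc: "D 0 0 = 0" "D 0 1 = 0"
    and x: "x \<in> {0..1}" and "d \<le> 1/2" and y: "\<bar>y - x\<bar> \<le> d"
  shows "\<bar>zero_ext (D 0) y - (D 0 x + D 1 x * (y - x) + D 2 x / 2 * (y - x)^2)\<bar>
           \<le> M3 * d^3 / 2 + (M1 + M2) * dist_unit_interval y"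
proof -
  define P where "P z = D 0 x + D 1 x * (z - x) + D 2 x / 2 * (z - x)^2" for z
  have "0 \<le> M3" using M3[of 0] by simp
  have taylor: "\<bar>D 0 z - P z\<bar> \<le> M3 * d^3 / 2" if z: "z \<in> {0..1}" "\<bar>z - x\<bar> \<le> d" for z
  proof -
    have "\<bar>D 0 z - P z\<bar> \<le> M3 * \<bar>z - x\<bar>^3 / 2"
      unfolding P_def by (rule taylor_quadratic_remainder[OF der M3 x z(1)])
    also have "\<dots> \<le> M3 * d^3 / 2"
      using z(2) \<open>0 \<le> M3\<close> by (intro divide_right_mono mult_left_mono power_mono) auto
    finally show ?thesis .
  qed
  text \<open>Outside \<open>[0,1]\<close> the zero extension is compared with the Taylor polynomial through
    the nearest endpoint \<open>b\<close>, where both vanish up to the Taylor remainder.\<close>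
  have endpoint: "\<bar>P y\<bar> \<le> M3 * d^3 / 2 + (M1 + M2) * \<bar>y - b\<bar>"
    if b: "b \<in> {0..1}" "D 0 b = 0" "\<bar>b - x\<bar> \<le> d" for b
  proof -
    have "P y - P b = (y - b) * (D 1 x + D 2 x * (y + b - 2 * x) / 2)"
      unfolding P_def by (simp add: power2_eq_square field_simps)
    moreover have "\<bar>D 1 x + D 2 x * (y + b - 2 * x) / 2\<bar> \<le> M1 + M2"
    proof -
      have "\<bar>y + b - 2 * x\<bar> \<le> 1"
        using b(3) y \<open>d \<le> 1/2\<close> by (simp add: abs_le_iff)
      then have "\<bar>D 2 x\<bar> * \<bar>y + b - 2 * x\<bar> \<le> M2 * 1"
        using M2[OF x] by (intro mult_mono) auto
      moreover have "0 \<le> \<bar>D 2 x\<bar> * \<bar>y + b - 2 * x\<bar>"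
        by simp
      ultimately have "\<bar>D 2 x * (y + b - 2 * x) / 2\<bar> \<le> M2"
        unfolding abs_divide abs_mult abs_numeral by linarith
      then show ?thesis
        using M1[OF x] abs_triangle_ineq[of "D 1 x" "D 2 x * (y + b - 2 * x) / 2"] by linarith
    qed
    ultimately have "\<bar>P y - P b\<bar> \<le> \<bar>y - b\<bar> * (M1 + M2)"
      by (simp add: abs_mult mult_left_mono)
    moreover have "\<bar>P b\<bar> \<le> M3 * d^3 / 2"
      using taylor[OF b(1,3)] b(2) by simp
    ultimately show ?thesis by (simp add: mult.commute)
  qed
  consider "y \<in> {0..1}" | "y < 0" | "y > 1" by force
  then show ?thesis
  proof cases
    case 1
    then show ?thesis
      using taylor[OF 1 y] M1[of 0] M2[of 0] by (simp add: zero_ext_def dist_unit_interval_def P_def)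
  next
    case 2
    then show ?thesis
      using endpoint[of 0] bc x y by (simp add: zero_ext_def dist_unit_interval_def P_def)
  next
    case 3
    then show ?thesis
      using endpoint[of 1] bc x y by (simp add: zero_ext_def dist_unit_interval_def P_def abs_le_iff)
  qed
qed

lemma nonlocal_integrable_zero_ext:
  assumes "A1 w" "0 < d" "continuous_on {0..1} u"
  shows "nonlocal_integrable w d (zero_ext u) x"
proof -
  obtain B where "\<And>y. \<bar>zero_ext u y\<bar> \<le> B"
    using zero_ext_bounded[OF assms(3)] by blast
  then show ?thesis
    by (rule nonlocal_integrable_bounded[OF assms(1,2) zero_ext_borel_measurable[OF assms(3)]])
qed

lemma wdelta_set_integral_abs_le_layer:
  assumes "A1 w" "0 < d" "0 \<le> a"
    and int: "set_integrable lborel {x-d..x+d} (\<lambda>y. R y * wdelta w d x y)"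
    and R_le: "\<And>y. y \<in> {x-d..x+d} \<Longrightarrow> \<bar>R y\<bar> \<le> a + K * dist_unit_interval y"
  shows "\<bar>LINT y:{x-d..x+d}|lborel. R y * wdelta w d x y\<bar>
           \<le> 2 * a * w 0 / d^2 + K * (LINT y:{x-d..x+d}|lborel. dist_unit_interval y * wdelta w d x y)"
proof -
  define J where "J = {x-d..x+d}"
  define W where "W = wdelta w d x"
  have iW: "set_integrable lborel J W"
    using wdelta_set_integrable_continuous[OF assms(1,2), of "\<lambda>_. 1" x] by (simp add: J_def W_def)
  have iG: "set_integrable lborel J (\<lambda>y. dist_unit_interval y * W y)"
    unfolding J_def W_def
    by (rule wdelta_set_integrable_continuous[OF assms(1,2) continuous_on_dist_unit_interval])
  have "\<bar>LINT y:J|lborel. R y * W y\<bar> \<le> (LINT y:J|lborel. a * W y + K * (dist_unit_interval y * W y))"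
  proof (rule set_integral_abs_le)
    show "\<bar>R y * W y\<bar> \<le> a * W y + K * (dist_unit_interval y * W y)" if "y \<in> J" for y
      using mult_right_mono[OF R_le wdelta_nonneg[OF assms(1,2)], of y x] that
      unfolding J_def W_def by (simp add: abs_mult algebra_simps wdelta_nonneg[OF assms(1,2)])
  qed (use int iW iG in \<open>simp_all add: J_def W_def\<close>)
  also have "\<dots> = a * (LINT y:J|lborel. W y) + K * (LINT y:J|lborel. dist_unit_interval y * W y)"
    using iW iG by (simp add: set_integral_add)
  also have "\<dots> \<le> a * (2 * w 0 / d^2) + K * (LINT y:J|lborel. dist_unit_interval y * W y)"
    using mult_left_mono[OF wdelta_mass_bounds(2)[OF assms(1,2), of x] assms(3)]
    unfolding J_def W_def by simp
  finally show ?thesis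
    unfolding J_def W_def by (simp add: mult_ac)
qed

lemma truncation_error:
  fixes D :: "nat \<Rightarrow> real \<Rightarrow> real"
  assumes "A1 w" "0 < d" "d \<le> 1/2"
    and der: "\<And>i t. i \<le> 2 \<Longrightarrow> t \<in> {0..1} \<Longrightarrow>
      (D i has_real_derivative D (Suc i) t) (at t within {0..1})"
    and M1: "\<And>t. t \<in> {0..1} \<Longrightarrow> \<bar>D 1 t\<bar> \<le> M1"
    and M2: "\<And>t. t \<in> {0..1} \<Longrightarrow> \<bar>D 2 t\<bar> \<le> M2"
    and M3: "\<And>t. t \<in> {0..1} \<Longrightarrow> \<bar>D 3 t\<bar> \<le> M3"
    and bc: "D 0 0 = 0" "D 0 1 = 0"
    and x: "x \<in> {0..1}"
  shows "nonlocal_integrable w d (zero_ext (D 0)) x"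
    and "\<bar>nonlocal_op w d (zero_ext (D 0)) x + D 2 x\<bar>
           \<le> M3 * w 0 * d + (M1 + M2) * (LINT y:{x-d..x+d}|lborel. dist_unit_interval y * wdelta w d x y)"
proof -
  have "continuous_on {0..1} (D 0)"
    using der[of 0] by (intro DERIV_continuous_on) auto
  then show int: "nonlocal_integrable w d (zero_ext (D 0)) x"
    by (rule nonlocal_integrable_zero_ext[OF assms(1,2)])
  define R where "R y = zero_ext (D 0) y - (zero_ext (D 0) x + D 1 x * (y - x) + D 2 x / 2 * (y - x)^2)" for y
  note remainder = nonlocal_op_quadratic_remainder[OF assms(1,2) int, where a = "D 1 x" and b = "D 2 x",
      folded R_def]
  have "\<bar>R y\<bar> \<le> M3 * d^3 / 2 + (M1 + M2) * dist_unit_interval y" if "y \<in> {x-d..x+d}" for y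
    using zero_ext_taylor_bound[OF der M1 M2 M3 bc x assms(3), of y] that x
    unfolding R_def by (simp add: zero_ext_def abs_le_iff)
  moreover have "0 \<le> M3 * d^3 / 2"
    using M3[of 0] assms(2) by simp
  ultimately have "\<bar>LINT y:{x-d..x+d}|lborel. R y * wdelta w d x y\<bar>
      \<le> 2 * (M3 * d^3 / 2) * w 0 / d^2
         + (M1 + M2) * (LINT y:{x-d..x+d}|lborel. dist_unit_interval y * wdelta w d x y)"
    by (intro wdelta_set_integral_abs_le_layer[OF assms(1,2) _ remainder(1)])
  also have "2 * (M3 * d^3 / 2) * w 0 / d^2 = M3 * w 0 * d"
    using assms(2) by (simp add: power2_eq_square power3_eq_cube)
  finally show "\<bar>nonlocal_op w d (zero_ext (D 0)) x + D 2 x\<bar>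
      \<le> M3 * w 0 * d + (M1 + M2) * (LINT y:{x-d..x+d}|lborel. dist_unit_interval y * wdelta w d x y)"
    using remainder(2) by simp
qed

section \<open>The barrier\<close>

definition barrier :: "real \<Rightarrow> real \<Rightarrow> real \<Rightarrow> real \<Rightarrow> real" where
  "barrier A K d y = A * d * ((y + d) * (1 + d - y)) + K * (d - dist_unit_interval y)"

lemma barrier_nonneg:
  assumes "0 \<le> A" "0 \<le> K" "0 \<le> d" "y \<in> {-d..1+d}"
  shows "0 \<le> barrier A K d y"
proof -
  have "0 \<le> (y + d) * (1 + d - y)" "dist_unit_interval y \<le> d"
    using assms(3,4) by (auto simp: dist_unit_interval_def)
  then show ?thesis
    unfolding barrier_def using assms(1-3) by (simp add: add_nonneg_nonneg)
qed

lemma barrier_le: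
  assumes "0 \<le> A" "0 \<le> K" "0 \<le> d" "d \<le> 1/2" "y \<in> {0..1}"
  shows "barrier A K d y \<le> (A + K) * d"
proof -
  have "(y + d) * (1 + d - y) = ((1 + 2 * d) / 2)^2 - (y - 1/2)^2"
    by (simp add: power2_eq_square field_simps)
  also have "\<dots> \<le> 1"
  proof -
    have "((1 + 2 * d) / 2)^2 \<le> 1^2"
      using assms(3,4) by (intro power_mono) auto
    then show ?thesis
      using zero_le_power2[of "y - 1/2"] unfolding one_power2 by linarith
  qed
  finally have "A * d * ((y + d) * (1 + d - y)) \<le> A * d * 1"
    using assms(1,3) by (intro mult_left_mono) auto
  moreover have "dist_unit_interval y = 0"
    using assms(5) by (simp add: dist_unit_interval_def)
  ultimately show ?thesis
    by (simp add: barrier_def algebra_simps)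
qed

lemma nonlocal_op_barrier:
  assumes "A1 w" "0 < d" "x \<in> {0..1}"
  shows "nonlocal_integrable w d (barrier A K d) x"
    and "nonlocal_op w d (barrier A K d) x
           = 2 * A * d + K * (LINT y:{x-d..x+d}|lborel. dist_unit_interval y * wdelta w d x y)"
proof -
  show int: "nonlocal_integrable w d (barrier A K d) x"
    unfolding barrier_def
    by (intro nonlocal_integrable_continuous[OF assms(1,2)] continuous_intros continuous_on_dist_unit_interval)
  have "dist_unit_interval x = 0"
    using assms(3) by (simp add: dist_unit_interval_def)
  then have "barrier A K d y - (barrier A K d x + A * d * (1 - 2 * x) * (y - x) + - 2 * A * d / 2 * (y - x)^2)
      = - K * dist_unit_interval y" for y
    by (simp add: barrier_def power2_eq_square algebra_simps)
  then show "nonlocal_op w d (barrier A K d) x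
      = 2 * A * d + K * (LINT y:{x-d..x+d}|lborel. dist_unit_interval y * wdelta w d x y)"
    using nonlocal_op_quadratic_remainder(2)[OF assms(1,2) int,
        where a = "A * d * (1 - 2 * x)" and b = "- 2 * A * d"]
    by (simp add: set_lebesgue_integral_def mult.assoc mult.left_commute[of _ K])
qed

lemma mult_le_abs_if_abs_eq_1: "\<bar>s\<bar> = 1 \<Longrightarrow> s * t \<le> \<bar>t :: real\<bar>"
  by (metis abs_ge_self abs_mult mult_1)

lemma comparison_function_subsolution:
  fixes D :: "nat \<Rightarrow> real \<Rightarrow> real" and U :: "real \<Rightarrow> real"
  assumes "A1 w" "0 < d" "d \<le> 1/2" "\<bar>s\<bar> = 1"
    and der: "\<And>i t. i \<le> 2 \<Longrightarrow> t \<in> {0..1} \<Longrightarrow>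
      (D i has_real_derivative D (Suc i) t) (at t within {0..1})"
    and M1: "\<And>t. t \<in> {0..1} \<Longrightarrow> \<bar>D 1 t\<bar> \<le> M1"
    and M2: "\<And>t. t \<in> {0..1} \<Longrightarrow> \<bar>D 2 t\<bar> \<le> M2"
    and M3: "\<And>t. t \<in> {0..1} \<Longrightarrow> \<bar>D 3 t\<bar> \<le> M3"
    and bc: "D 0 0 = 0" "D 0 1 = 0"
    and x: "x \<in> {0<..<1}"
    and U_int: "nonlocal_integrable w d U x" and U_op: "nonlocal_op w d U x = - D 2 x"
  defines "V \<equiv> \<lambda>y. s * (U y - zero_ext (D 0) y) - barrier (M3 * w 0 / 2 + 1) (M1 + M2) d y"
  shows "nonlocal_integrable w d V x" and "nonlocal_op w d V x \<le> - 2 * d"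
proof -
  have x01: "x \<in> {0..1}"
    using x by simp
  define I where "I = (LINT y:{x-d..x+d}|lborel. dist_unit_interval y * wdelta w d x y)"
  note trunc = truncation_error[OF assms(1-3) der M1 M2 M3 bc x01]
  note bar = nonlocal_op_barrier[OF assms(1,2) x01, where A = "M3 * w 0 / 2 + 1" and K = "M1 + M2",
      folded I_def]
  note diff = nonlocal_op_diff[OF U_int trunc(1)]
  note scaled = nonlocal_op_cmult[OF diff(1), of s]
  note comb = nonlocal_op_diff[OF scaled(1) bar(1), folded V_def]
  show "nonlocal_integrable w d V x"
    by (rule comb(1))
  have "nonlocal_op w d V x = s * (- D 2 x - nonlocal_op w d (zero_ext (D 0)) x)
      - nonlocal_op w d (barrier (M3 * w 0 / 2 + 1) (M1 + M2) d) x"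
    using comb(2) scaled(2) diff(2) U_op by simp
  also have "\<dots> \<le> \<bar>nonlocal_op w d (zero_ext (D 0)) x + D 2 x\<bar>
      - nonlocal_op w d (barrier (M3 * w 0 / 2 + 1) (M1 + M2) d) x"
    using mult_le_abs_if_abs_eq_1[OF assms(4), of "- D 2 x - nonlocal_op w d (zero_ext (D 0)) x"]
    by (simp add: abs_minus_commute add.commute)
  also have "\<dots> \<le> M3 * w 0 * d + (M1 + M2) * I - (2 * (M3 * w 0 / 2 + 1) * d + (M1 + M2) * I)"
    using trunc(2) bar(2) unfolding I_def by simp
  finally show "nonlocal_op w d V x \<le> - 2 * d"
    by (simp add: algebra_simps)
qed

lemma nonlocal_one_sided_error:
  fixes D :: "nat \<Rightarrow> real \<Rightarrow> real" and U :: "real \<Rightarrow> real"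
  assumes "A1 w" "0 < d" "d \<le> 1/2" "\<bar>s\<bar> = 1"
    and der: "\<And>i t. i \<le> 2 \<Longrightarrow> t \<in> {0..1} \<Longrightarrow>
      (D i has_real_derivative D (Suc i) t) (at t within {0..1})"
    and M1: "\<And>t. t \<in> {0..1} \<Longrightarrow> \<bar>D 1 t\<bar> \<le> M1"
    and M2: "\<And>t. t \<in> {0..1} \<Longrightarrow> \<bar>D 2 t\<bar> \<le> M2"
    and M3: "\<And>t. t \<in> {0..1} \<Longrightarrow> \<bar>D 3 t\<bar> \<le> M3"
    and bc: "D 0 0 = 0" "D 0 1 = 0"
    and U_collar: "\<And>y. y \<in> {-d<..0} \<or> y \<in> {1..<1+d} \<Longrightarrow> U y = 0"
    and U_eq: "AE x in lborel. x \<in> {0<..<1} \<longrightarrow>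
      nonlocal_integrable w d U x \<and> nonlocal_op w d U x = - D 2 x"
    and U_bounded: "AE x in lborel. x \<in> {0<..<1} \<longrightarrow> \<bar>U x\<bar> \<le> B"
  defines "\<Phi> \<equiv> barrier (M3 * w 0 / 2 + 1) (M1 + M2) d"
  shows "AE x in lborel. x \<in> {0<..<1} \<longrightarrow> s * (U x - zero_ext (D 0) x) \<le> \<Phi> x"
proof -
  define V where "V = (\<lambda>y. s * (U y - zero_ext (D 0) y) - \<Phi> y)"
  have \<Phi>_nonneg: "0 \<le> \<Phi> y" if "y \<in> {-d..1+d}" for y
    unfolding \<Phi>_def using M1[of 0] M2[of 0] M3[of 0] A1_nonneg[OF assms(1), of 0] assms(2) that
    by (intro barrier_nonneg) auto
  obtain B0 where B0: "\<And>y. \<bar>zero_ext (D 0) y\<bar> \<le> B0"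
    using zero_ext_bounded DERIV_continuous_on der[of 0] by (metis le0)
  have "AE x in lborel. x \<in> {0<..<1} \<longrightarrow> V x \<le> 0"
  proof (rule nonlocal_max_principle[OF assms(1,2,2)])
    show "V y \<le> 0" if "y \<in> {-d<..0} \<or> y \<in> {1..<1+d}" for y
    proof -
      have "zero_ext (D 0) y = 0"
        using that bc by (cases "y = 0 \<or> y = 1") (auto simp: zero_ext_def)
      then show ?thesis
        using that U_collar[OF that] \<Phi>_nonneg[of y] by (auto simp: V_def)
    qed
    show "AE x in lborel. x \<in> {0<..<1} \<longrightarrow> V x \<le> B + B0"
      using U_bounded
    proof eventually_elim
      case (elim x)
      have "s * (U x - zero_ext (D 0) x) \<le> \<bar>U x - zero_ext (D 0) x\<bar>"
        using assms(4) by (rule mult_le_abs_if_abs_eq_1)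
      then show ?case
        using elim B0[of x] \<Phi>_nonneg[of x] assms(2) by (auto simp: V_def)
    qed
    show "AE x in lborel. x \<in> {0<..<1} \<longrightarrow> nonlocal_integrable w d V x \<and> nonlocal_op w d V x \<le> - d"
      using U_eq
    proof eventually_elim
      case (elim x)
      show ?case
        using comparison_function_subsolution[OF assms(1-4) der M1 M2 M3 bc _ _ _, of x U]
          elim assms(2) unfolding V_def \<Phi>_def by fastforce
    qed
  qed
  then show ?thesis
    by eventually_elim (simp add: V_def)
qed

lemma nonlocal_error_estimate:
  fixes D :: "nat \<Rightarrow> real \<Rightarrow> real" and U :: "real \<Rightarrow> real"
  assumes "A1 w" "0 < d" "d \<le> 1/2"
    and der: "\<And>i t. i \<le> 2 \<Longrightarrow> t \<in> {0..1} \<Longrightarrow>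
      (D i has_real_derivative D (Suc i) t) (at t within {0..1})"
    and M1: "\<And>t. t \<in> {0..1} \<Longrightarrow> \<bar>D 1 t\<bar> \<le> M1"
    and M2: "\<And>t. t \<in> {0..1} \<Longrightarrow> \<bar>D 2 t\<bar> \<le> M2"
    and M3: "\<And>t. t \<in> {0..1} \<Longrightarrow> \<bar>D 3 t\<bar> \<le> M3"
    and bc: "D 0 0 = 0" "D 0 1 = 0"
    and U_L1: "set_integrable lborel {0<..<1} (\<lambda>y. \<bar>U y\<bar>)"
    and U_collar: "\<And>y. y \<in> {-d<..0} \<or> y \<in> {1..<1+d} \<Longrightarrow> U y = 0"
    and U_eq: "AE x in lborel. x \<in> {0<..<1} \<longrightarrow>
      nonlocal_integrable w d U x \<and> nonlocal_op w d U x = - D 2 x"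
  shows "AE x in lborel. x \<in> {0<..<1} \<longrightarrow> \<bar>U x - D 0 x\<bar> \<le> (M3 * w 0 / 2 + 1 + M1 + M2) * d"
proof -
  have U_op_le: "AE x in lborel. x \<in> {0<..<1} \<longrightarrow>
      nonlocal_integrable w d U x \<and> \<bar>nonlocal_op w d U x\<bar> \<le> M2"
    using U_eq by eventually_elim (auto intro: M2)
  have bounded: "AE x in lborel. x \<in> {0<..<1} \<longrightarrow>
      \<bar>U x\<bar> \<le> (M2 + w 0 / d^3 * (LINT y:{0<..<1}|lborel. \<bar>U y\<bar>)) / (w (1/2) / d^2)"
    by (rule nonlocal_solution_ess_bounded[OF assms(1,2) U_L1 U_collar U_op_le])
  have one_sided: "AE x in lborel. x \<in> {0<..<1} \<longrightarrow>
      s * (U x - zero_ext (D 0) x) \<le> barrier (M3 * w 0 / 2 + 1) (M1 + M2) d x" if "\<bar>s\<bar> = 1" for s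
    by (rule nonlocal_one_sided_error[OF assms(1-3) that der M1 M2 M3 bc U_collar U_eq bounded])
  have unit: "\<bar>1 :: real\<bar> = 1" "\<bar>-1 :: real\<bar> = 1"
    by simp_all
  show ?thesis
    using one_sided[OF unit(1)] one_sided[OF unit(2)]
  proof eventually_elim
    case (elim x)
    show ?case
    proof
      assume x: "x \<in> {0<..<1}"
      then have "zero_ext (D 0) x = D 0 x"
        by (simp add: zero_ext_def)
      then have "\<bar>U x - D 0 x\<bar> \<le> barrier (M3 * w 0 / 2 + 1) (M1 + M2) d x"
        using elim x by (intro abs_leI) auto
      also have "\<dots> \<le> (M3 * w 0 / 2 + 1 + M1 + M2) * d"
        using barrier_le[of "M3 * w 0 / 2 + 1" "M1 + M2" d x] M1[of 0] M2[of 0] M3[of 0]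
          A1_nonneg[OF assms(1), of 0] assms(2,3) x by (simp add: add.assoc)
      finally show "\<bar>U x - D 0 x\<bar> \<le> (M3 * w 0 / 2 + 1 + M1 + M2) * d" .
    qed
  qed
qed

theorem mainTheorem11:
  fixes w f u :: "real \<Rightarrow> real" and ud :: "real \<Rightarrow> real \<Rightarrow> real"
  assumes hw: "A1 w"
    and hf: "Ck_on 2 {0..1} f"
    and hu: "Ck_on 4 {0..1} u"
    and hpde: "\<forall>x\<in>{0<..<1}. - deriv (deriv u) x = f x"
    and hbc: "u 0 = 0" "u 1 = 0"
    and hud_meas: "\<forall>\<delta>\<in>{0<..<1/2}. ud \<delta> \<in> borel_measurable lborel"
    and hud_L2: "\<forall>\<delta>\<in>{0<..<1/2}. set_integrable lborel {0<..<1} (\<lambda>x. (ud \<delta> x)\<^sup>2)"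
    and hud_ext: "\<forall>\<delta>\<in>{0<..<1/2}. \<forall>y. (y \<in> {-\<delta><..0} \<or> y \<in> {1..<1+\<delta>}) \<longrightarrow> ud \<delta> y = 0"
    and hud_eq: "\<forall>\<delta>\<in>{0<..<1/2}. AE x in lborel. x \<in> {0<..<1} \<longrightarrow>
         set_integrable lborel {x-\<delta>..x+\<delta>} (\<lambda>y. (ud \<delta> x - ud \<delta> y) * wdelta w \<delta> x y) \<and>
         (LINT y:{x-\<delta>..x+\<delta>}|lborel. (ud \<delta> x - ud \<delta> y) * wdelta w \<delta> x y) = f x"
  shows "\<exists>\<delta>0>0. \<exists>C>0. \<forall>\<delta>\<in>{0<..<\<delta>0}.
           AE x in lborel. x \<in> {0<..<1} \<longrightarrow> \<bar>ud \<delta> x - u x\<bar> \<le> C * \<delta>"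
proof -
  obtain D M where D0: "D 0 = u" and "0 \<le> M"
    and der: "\<And>i t. i < 4 \<Longrightarrow> t \<in> {0..1} \<Longrightarrow>
      (D i has_real_derivative D (Suc i) t) (at t within {0..1})"
    and bounded: "\<And>i t. i \<le> 4 \<Longrightarrow> t \<in> {0..1} \<Longrightarrow> \<bar>D i t\<bar> \<le> M"
    using Ck_on_bounded_derivatives[OF hu] by blast
  have f_eq: "f x = - D 2 x" if x: "x \<in> {0<..<1}" for x
    using deriv_deriv_eq[of 0 1 D x] der x hpde D0 by force
  define C where "C = M * w 0 / 2 + 1 + M + M"
  have "0 < C"
    unfolding C_def using mult_nonneg_nonneg[OF \<open>0 \<le> M\<close> A1_nonneg[OF hw, of 0]] \<open>0 \<le> M\<close> by simp
  moreover have "AE x in lborel. x \<in> {0<..<1} \<longrightarrow> \<bar>ud \<delta> x - u x\<bar> \<le> C * \<delta>"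
    if \<delta>: "\<delta> \<in> {0<..<1/2}" for \<delta>
  proof -
    have L1: "set_integrable lborel {0<..<1} (\<lambda>y. \<bar>ud \<delta> y\<bar>)"
      using hud_meas hud_L2 \<delta> by (intro set_integrable_abs_of_square) auto
    have eq: "AE x in lborel. x \<in> {0<..<1} \<longrightarrow>
        nonlocal_integrable w \<delta> (ud \<delta>) x \<and> nonlocal_op w \<delta> (ud \<delta>) x = - D 2 x"
      using hud_eq[rule_format, OF \<delta>]
      by eventually_elim (auto simp: nonlocal_integrable_def nonlocal_op_def f_eq)
    show ?thesis
      unfolding C_def D0[symmetric]
    proof (rule nonlocal_error_estimate[where D = D and U = "ud \<delta>", OF hw _ _ _ _ _ _ _ _ L1 _ eq])
      show "ud \<delta> y = 0" if "y \<in> {-\<delta><..0} \<or> y \<in> {1..<1+\<delta>}" for y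
        using hud_ext \<delta> that by blast
    qed (use \<delta> der bounded hbc D0 in auto)
  qed
  ultimately show ?thesis
    by (intro exI[of _ "1/2"] exI[of _ C]) auto
qed

end
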